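(* Let $a_n$ denote the maximum degree of a minimal monomial generator of $J(P_n)$. For every $n\geq5$, $a_n=\max\{a_{n-2}+1,\,a_{n-3}+2\}$. For every $n\geq 2$, $$a_n=\begin{cases}2k & \text{if } n=3k+1 \text{ or } n=3k,\\ 2k+1 & \text{if } n=3k+2.\end{cases}$$
   Context: $P_n$ is the path graph on vertices $x_1,\ldots,x_n$ with edges $\{x_i,x_{i+1}\}$, $1\le i\le n-1$, and $J(P_n)\subset K[x_1,\ldots,x_n]$ ($K$ a field) is its cover ideal, generated by the monomials $\prod_{x\in C}x$ with $C$ a minimal vertex cover of $P_n$. *)

theory Defs
  imports Main
begin

definition path_edges :: "nat \<Rightarrow> nat set set" where
  "path_edges n = {{i, Suc i} | i. 1 \<le> i \<and> i < n}"

definition is_vertex_cover :: "nat \<Rightarrow> nat set \<Rightarrow> bool" where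
  "is_vertex_cover n C \<longleftrightarrow> C \<subseteq> {1..n} \<and> (\<forall>e\<in>path_edges n. e \<inter> C \<noteq> {})"

definition is_min_vertex_cover :: "nat \<Rightarrow> nat set \<Rightarrow> bool" where
  "is_min_vertex_cover n C \<longleftrightarrow> is_vertex_cover n C \<and> (\<forall>D. D \<subset> C \<longrightarrow> \<not> is_vertex_cover n D)"

text \<open>Monomials in x_1..x_n are represented by their exponent vectors
  (functions nat => nat supported on {1..n}); divisibility is pointwise <=.\<close>

definition monomials :: "nat \<Rightarrow> (nat \<Rightarrow> nat) set" where
  "monomials n = {m. \<forall>i. m i \<noteq> 0 \<longrightarrow> i \<in> {1..n}}"

definition mdeg :: "nat \<Rightarrow> (nat \<Rightarrow> nat) \<Rightarrow> nat" where
  "mdeg n m = (\<Sum>i\<in>{1..n}. m i)"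

definition cover_monomial :: "nat set \<Rightarrow> (nat \<Rightarrow> nat)" where
  "cover_monomial C = (\<lambda>i. if i \<in> C then 1 else 0)"

definition cover_gens :: "nat \<Rightarrow> (nat \<Rightarrow> nat) set" where
  "cover_gens n = cover_monomial ` {C. is_min_vertex_cover n C}"

definition ideal_monomials :: "nat \<Rightarrow> (nat \<Rightarrow> nat) set \<Rightarrow> (nat \<Rightarrow> nat) set" where
  "ideal_monomials n G = {m \<in> monomials n. \<exists>g\<in>G. g \<le> m}"

definition min_monomial_gens :: "nat \<Rightarrow> (nat \<Rightarrow> nat) set \<Rightarrow> (nat \<Rightarrow> nat) set" where
  "min_monomial_gens n G = {m \<in> ideal_monomials n G.
      \<forall>m'\<in>ideal_monomials n G. m' \<le> m \<longrightarrow> m' = m}"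

definition a_seq :: "nat \<Rightarrow> nat" where
  "a_seq n = Max (mdeg n ` min_monomial_gens n (cover_gens n))"

end

theory Submission
  imports Defs
begin

text \<open>The minimal generators of J(P_n) are the monomials of the minimal vertex covers, so a_n is
  the largest size of a minimal vertex cover C of P_n. Minimality means that every vertex of C
  has a neighbour outside C; hence the complement of C dominates the path, and as each vertex
  dominates at most three vertices, it has at least ceil(n/3) elements. Leaving out every third
  vertex (suitably aligned) gives a minimal cover attaining this bound, so
  a_n = n - ceil(n/3) = floor(2n/3), from which both claims are arithmetic.\<close>

lemma min_monomial_gens_antichain:
  assumes "G \<subseteq> monomials n" and "\<And>g h. g \<in> G \<Longrightarrow> h \<in> G \<Longrightarrow> h \<le> g \<Longrightarrow> h = g"
  shows "min_monomial_gens n G = G"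
proof
  have G_ideal: "G \<subseteq> ideal_monomials n G"
    using assms(1) unfolding ideal_monomials_def by blast
  show "min_monomial_gens n G \<subseteq> G"
  proof
    fix m assume m: "m \<in> min_monomial_gens n G"
    then obtain g where "g \<in> G" "g \<le> m"
      unfolding min_monomial_gens_def ideal_monomials_def by blast
    with m G_ideal show "m \<in> G" unfolding min_monomial_gens_def by blast
  qed
  show "G \<subseteq> min_monomial_gens n G"
  proof
    fix g assume g: "g \<in> G"
    have "m = g" if m: "m \<in> ideal_monomials n G" "m \<le> g" for m
    proof -
      obtain h where "h \<in> G" "h \<le> m"
        using m(1) unfolding ideal_monomials_def by blast
      with g m(2) assms(2) have "h = g" by (meson order_trans)
      with \<open>h \<le> m\<close> m(2) show ?thesis by simp
    qed
    with g G_ideal show "g \<in> min_monomial_gens n G"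
      unfolding min_monomial_gens_def by blast
  qed
qed

lemma cover_monomial_le_iff: "cover_monomial C \<le> cover_monomial D \<longleftrightarrow> C \<subseteq> D"
  unfolding cover_monomial_def le_fun_def by (auto split: if_splits)

lemma mdeg_cover_monomial: "C \<subseteq> {1..n} \<Longrightarrow> mdeg n (cover_monomial C) = card C"
  unfolding mdeg_def cover_monomial_def
  by (simp add: sum.If_cases Int_absorb1 flip: Int_def)

lemma min_vertex_cover_subset: "is_min_vertex_cover n C \<Longrightarrow> C \<subseteq> {1..n}"
  unfolding is_min_vertex_cover_def is_vertex_cover_def by blast

lemma min_monomial_gens_cover_gens: "min_monomial_gens n (cover_gens n) = cover_gens n"
proof (rule min_monomial_gens_antichain)
  show "cover_gens n \<subseteq> monomials n"
    unfolding cover_gens_def monomials_def cover_monomial_def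
    by (auto split: if_splits dest!: min_vertex_cover_subset)
  show "h = g" if gh: "g \<in> cover_gens n" "h \<in> cover_gens n" "h \<le> g" for g h
  proof -
    obtain C D where C: "is_min_vertex_cover n C" "g = cover_monomial C"
      and D: "is_min_vertex_cover n D" "h = cover_monomial D"
      using gh(1,2) unfolding cover_gens_def by blast
    with gh(3) have "D \<subseteq> C" by (simp add: cover_monomial_le_iff)
    with C(1) D(1) have "D = C" unfolding is_min_vertex_cover_def by blast
    with C(2) D(2) show ?thesis by simp
  qed
qed

lemma a_seq_eq_Max_card: "a_seq n = Max (card ` {C. is_min_vertex_cover n C})"
proof -
  have "mdeg n ` cover_gens n = card ` {C. is_min_vertex_cover n C}"
    unfolding cover_gens_def image_image
    using mdeg_cover_monomial min_vertex_cover_subset by (intro image_cong) auto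
  then show ?thesis unfolding a_seq_def min_monomial_gens_cover_gens by simp
qed

lemma path_edgesI: "1 \<le> i \<Longrightarrow> i < n \<Longrightarrow> {i, Suc i} \<in> path_edges n"
  unfolding path_edges_def by auto

lemma path_edgesE:
  assumes "e \<in> path_edges n"
  obtains i where "e = {i, Suc i}" "1 \<le> i" "i < n"
  using assms unfolding path_edges_def by auto

lemma vertex_cover_edge:
  assumes "is_vertex_cover n C" and "1 \<le> i" and "i < n"
  shows "i \<in> C \<or> Suc i \<in> C"
proof -
  have "{i, Suc i} \<inter> C \<noteq> {}"
    using assms(1) path_edgesI[OF assms(2,3)] unfolding is_vertex_cover_def by blast
  then show ?thesis by blast
qed

lemma is_min_vertex_cover_iff:
  "is_min_vertex_cover n C \<longleftrightarrow>
     is_vertex_cover n C \<and> (\<forall>v\<in>C. \<exists>u\<in>{1..n} - C. u = Suc v \<or> v = Suc u)"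
proof (intro iffI conjI ballI)
  assume min: "is_min_vertex_cover n C"
  then show vc: "is_vertex_cover n C" unfolding is_min_vertex_cover_def by blast
  fix v assume "v \<in> C"
  show "\<exists>u\<in>{1..n} - C. u = Suc v \<or> v = Suc u"
  proof (rule ccontr)
    assume no_nb: "\<not> ?thesis"
    have "is_vertex_cover n (C - {v})"
      unfolding is_vertex_cover_def
    proof (intro conjI ballI)
      show "C - {v} \<subseteq> {1..n}" using vc unfolding is_vertex_cover_def by blast
      fix e assume "e \<in> path_edges n"
      then obtain i where e: "e = {i, Suc i}" "1 \<le> i" "i < n" by (rule path_edgesE)
      have "i \<in> C \<and> Suc i \<in> C" if "v = i \<or> v = Suc i"
        using that no_nb \<open>v \<in> C\<close> e(2,3) by auto
      with vertex_cover_edge[OF vc e(2,3)] show "e \<inter> (C - {v}) \<noteq> {}"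
        unfolding e(1) by auto
    qed
    moreover have "C - {v} \<subset> C" using \<open>v \<in> C\<close> by blast
    ultimately show False using min unfolding is_min_vertex_cover_def by blast
  qed
next
  assume vc_nb: "is_vertex_cover n C \<and> (\<forall>v\<in>C. \<exists>u\<in>{1..n} - C. u = Suc v \<or> v = Suc u)"
  have "\<not> is_vertex_cover n D" if "D \<subset> C" for D
  proof
    assume D: "is_vertex_cover n D"
    obtain v where v: "v \<in> C" "v \<notin> D" using \<open>D \<subset> C\<close> by blast
    then obtain u where u: "u \<in> {1..n} - C" "u = Suc v \<or> v = Suc u" using vc_nb by blast
    have "u \<notin> D" "v \<in> {1..n}"
      using u(1) \<open>D \<subset> C\<close> vc_nb v(1) unfolding is_vertex_cover_def by auto
    with u(1) v(2) show False
      using u(2) vertex_cover_edge[OF D, of v] vertex_cover_edge[OF D, of u] by auto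
  qed
  with vc_nb show "is_min_vertex_cover n C" unfolding is_min_vertex_cover_def by blast
qed

lemma min_vertex_cover_complement_card_ge:
  assumes "is_min_vertex_cover n C"
  shows "n \<le> 3 * card ({1..n} - C)"
proof -
  let ?S = "{1..n} - C"
  have "{1..n} \<subseteq> (\<Union>s\<in>?S. {s - 1, s, Suc s})"
  proof
    fix v assume v: "v \<in> {1..n}"
    show "v \<in> (\<Union>s\<in>?S. {s - 1, s, Suc s})"
    proof (cases "v \<in> C")
      case True
      then obtain u where "u \<in> ?S" "u = Suc v \<or> v = Suc u"
        using assms unfolding is_min_vertex_cover_iff by blast
      moreover from this(2) have "v \<in> {u - 1, u, Suc u}" by auto
      ultimately show ?thesis by blast
    qed (use v in auto)
  qed
  then have "n \<le> card (\<Union>s\<in>?S. {s - 1, s, Suc s})"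
    using card_mono[of "\<Union>s\<in>?S. {s - 1, s, Suc s}" "{1..n}"] by simp
  also have "\<dots> \<le> (\<Sum>s\<in>?S. card {s - 1, s, Suc s})" by (rule card_UN_le) simp
  also have "\<dots> \<le> (\<Sum>s\<in>?S. 3)" by (rule sum_mono) (simp add: card_insert_if)
  finally show ?thesis by simp
qed

lemma min_vertex_cover_card_le:
  assumes "is_min_vertex_cover n C"
  shows "card C \<le> n - (n + 2) div 3"
proof -
  have "C \<subseteq> {1..n}" using assms by (rule min_vertex_cover_subset)
  then have "card ({1..n} - C) = n - card C" "card C \<le> n"
    using card_mono[of "{1..n}" C] by (simp_all add: card_Diff_subset finite_subset)
  moreover have "(n + 2) div 3 \<le> card ({1..n} - C)"
    using min_vertex_cover_complement_card_ge[OF assms] by presburger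
  ultimately show ?thesis by linarith
qed

definition residue_cover :: "nat \<Rightarrow> nat \<Rightarrow> nat set" where
  "residue_cover n r = {i \<in> {1..n}. i mod 3 \<noteq> r}"

text \<open>The omitted residue class r is chosen so that the last vertex, if kept, still has an
  omitted neighbour.\<close>

lemma is_min_vertex_cover_residue_cover:
  assumes r: "r = (if n mod 3 = 0 then 2 else 1)"
  shows "is_min_vertex_cover n (residue_cover n r)"
  unfolding is_min_vertex_cover_iff
proof (intro conjI ballI)
  show "is_vertex_cover n (residue_cover n r)"
    unfolding is_vertex_cover_def
  proof (intro conjI ballI)
    show "residue_cover n r \<subseteq> {1..n}" unfolding residue_cover_def by blast
    fix e assume "e \<in> path_edges n"
    then obtain i where "e = {i, Suc i}" "1 \<le> i" "i < n" by (rule path_edgesE)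
    moreover have "i mod 3 \<noteq> Suc i mod 3" by (simp add: mod_Suc)
    ultimately show "e \<inter> residue_cover n r \<noteq> {}" unfolding residue_cover_def by auto
  qed
  fix v assume "v \<in> residue_cover n r"
  then have v: "1 \<le> v" "v \<le> n" "v mod 3 \<noteq> r" unfolding residue_cover_def by auto
  then obtain w where w: "v = Suc w" by (cases v) auto
  from r consider "n mod 3 = 0" "r = 2" | "n mod 3 \<noteq> 0" "r = 1" by (cases "n mod 3 = 0") auto
  then have "(Suc (Suc w) \<le> n \<and> Suc (Suc w) mod 3 = r) \<or> (1 \<le> w \<and> w mod 3 = r)"
    using v(2,3) unfolding w by cases presburger+
  then show "\<exists>u\<in>{1..n} - residue_cover n r. u = Suc v \<or> v = Suc u"
    using v(2) unfolding residue_cover_def w by auto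
qed

lemma card_residue_cover:
  assumes r: "r = (if n mod 3 = 0 then 2 else 1)"
  shows "card (residue_cover n r) = n - (n + 2) div 3"
proof -
  have "{1..n} - residue_cover n r \<subseteq> (\<lambda>j. 3 * j + r) ` {..<(n + 2) div 3}"
  proof
    fix i assume "i \<in> {1..n} - residue_cover n r"
    then have i: "i \<le> n" "i mod 3 = r" unfolding residue_cover_def by auto
    from r consider "n mod 3 = 0" "r = 2" | "r = 1" by (cases "n mod 3 = 0") auto
    then have "i div 3 < (n + 2) div 3" using i by cases presburger+
    moreover have "i = 3 * (i div 3) + r" using mult_div_mod_eq[of 3 i] i(2) by simp
    ultimately show "i \<in> (\<lambda>j. 3 * j + r) ` {..<(n + 2) div 3}" by blast
  qed
  then have "card ({1..n} - residue_cover n r) \<le> card ((\<lambda>j. 3 * j + r) ` {..<(n + 2) div 3})"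
    by (intro card_mono) auto
  also have "\<dots> \<le> card {..<(n + 2) div 3}" by (rule card_image_le) simp
  finally have "card ({1..n} - residue_cover n r) \<le> (n + 2) div 3" by simp
  moreover have "card ({1..n} - residue_cover n r) = n - card (residue_cover n r)"
  proof -
    have "residue_cover n r \<subseteq> {1..n}" "finite (residue_cover n r)"
      unfolding residue_cover_def by auto
    then show ?thesis by (simp add: card_Diff_subset)
  qed
  moreover have "card (residue_cover n r) \<le> n - (n + 2) div 3"
    using min_vertex_cover_card_le[OF is_min_vertex_cover_residue_cover[OF r]] .
  ultimately show ?thesis by linarith
qed

lemma a_seq_eq: "a_seq n = 2 * n div 3"
proof -
  let ?covers = "{C. is_min_vertex_cover n C}"
  have "?covers \<subseteq> Pow {1..n}" using min_vertex_cover_subset by blast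
  then have "finite ?covers" by (rule finite_subset) simp
  have "Max (card ` ?covers) = n - (n + 2) div 3"
  proof (rule Max_eqI)
    show "finite (card ` ?covers)" using \<open>finite ?covers\<close> by simp
    show "y \<le> n - (n + 2) div 3" if "y \<in> card ` ?covers" for y
      using that min_vertex_cover_card_le by auto
    let ?r = "if n mod 3 = 0 then 2 else 1 :: nat"
    show "n - (n + 2) div 3 \<in> card ` ?covers"
      using is_min_vertex_cover_residue_cover[of ?r] card_residue_cover[of ?r] by force
  qed
  moreover have "n - (n + 2) div 3 = 2 * n div 3" by presburger
  ultimately show ?thesis unfolding a_seq_eq_Max_card by simp
qed

theorem lemma5p2:
  shows "(\<forall>n\<ge>5. a_seq n = max (a_seq (n - 2) + 1) (a_seq (n - 3) + 2))
       \<and> (\<forall>n k. n \<ge> 2 \<longrightarrow>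
            ((n = 3 * k + 1 \<or> n = 3 * k) \<longrightarrow> a_seq n = 2 * k)
          \<and> (n = 3 * k + 2 \<longrightarrow> a_seq n = 2 * k + 1))"
proof (intro conjI allI impI)
  fix n :: nat assume "n \<ge> 5"
  then obtain m where "n = m + 5" by (metis add.commute le_Suc_ex)
  moreover have "2 * (m + 5) div 3 = max (2 * (m + 3) div 3 + 1) (2 * (m + 2) div 3 + 2)"
    by presburger
  ultimately show "a_seq n = max (a_seq (n - 2) + 1) (a_seq (n - 3) + 2)"
    by (simp add: a_seq_eq)
next
  fix n k :: nat assume "n = 3 * k + 1 \<or> n = 3 * k"
  then show "a_seq n = 2 * k" unfolding a_seq_eq by presburger
next
  fix n k :: nat assume "n = 3 * k + 2"
  then show "a_seq n = 2 * k + 1" unfolding a_seq_eq by presburger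
qed

end
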